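(* Let $(p_1,\alpha^1,\beta^1)$ and $(p_2,\alpha^2,\beta^2)$ be two equilibria, with demand and supply maps $D_1,S_1$ (for $p_1$) and $D_2,S_2$ (for $p_2$), and conditional probabilities $P^1_x,P^1_y$ and $P^2_x,P^2_y$. Then $P^2_x[D_1(x)]=P^1_x[D_1(x)]=1$ for $\mu$-almost every $x\in X$, and $P^2_y[S_1(y)]=P^1_y[S_1(y)]=1$ for $\nu$-almost every $y\in Y$.
   Context: Standing setting. $X\subset\mathbb R^{d_1}$, $Y\subset\mathbb R^{d_2}$, $Z_0\subset\mathbb R^{d_3}$ are compact sets (possibly finite). $\mu$ and $\nu$ are finite nonnegative Borel measures on $X$ and $Y$. $u$ is a continuous real function on a neighbourhood of $X\times Z_0$, differentiable in $x$ with $D_xu$ continuous; $v$ is a continuous real function on a neighbourhood of $Y\times Z_0$, differentiable in $y$ with $D_yv$ continuous. Let $\varnothing_d\neq\varnothing_s$ be two points not in $Z_0$ and $Z=Z_0\cup\{\varnothing_d\}\cup\{\varnothing_s\}$ (the added points isolated). Extend $u,v$ by $u(x,\varnothing_d)=0$, $u(x,\varnothing_s)=-1$, $v(y,\varnothing_s)=0$, $v(y,\varnothing_d)=1$. Define $b(z)=\max_{x}u(x,z)$, $a(z)=\min_{y}v(y,z)$, $Z_1=\{z\in Z: a(z)\le b(z)\}$. A price system is a continuous $p:Z\to\mathbb R$ with $p(\varnothing_d)=p(\varnothing_s)=0$; admissible if $a\le p\le b$ on $Z_1$. Given $p$: $D(x)=\arg\max_{z\in Z}\{u(x,z)-p(z)\}$,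 $S(y)=\arg\min_{z\in Z}\{v(y,z)-p(z)\}$. A demand distribution associated with $p$ is a positive Borel measure $\alpha$ on $X\times Z$ carried by the graph of $D$ with $X$-marginal $\mu$; a supply distribution is a positive Borel measure $\beta$ on $Y\times Z$ carried by the graph of $S$ with $Y$-marginal $\nu$. The conditional probabilities $(P^\alpha_x)_{x\in X}$ are the Borel probabilities on $Z$ disintegrating $\alpha$ with respect to $\mu$: $\int f\,d\alpha=\int_X\int_Z f(x,z)\,dP^\alpha_x(z)\,d\mu(x)$ for continuous $f$; similarly $(P^\beta_y)$ for $\beta$ with respect to $\nu$. An equilibrium is a triple $(p,\alpha,\beta)$ with $p$ admissible, $\alpha,\beta$ demand and supply distributions associated with $p$, and $\alpha_Z(A)=\beta_Z(A)$ for every Borel $A\subset Z_0$ ($\alpha_Z,\beta_Z$ the $Z$-marginals). For equilibrium $i$, $P^i_x:=P^{\alpha^i}_x$, $P^i_y:=P^{\beta^i}_y$. *)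

theory Defs
  imports "HOL-Probability.Probability"
begin

text \<open>The two extra goods zd (no demand / "empty_d") and zs ("empty_s") are two distinct
  points of 'c outside the compact set Z0 (hence isolated in Z).\<close>

definition Zset :: "'c set \<Rightarrow> 'c \<Rightarrow> 'c \<Rightarrow> 'c set" where
  "Zset Z0 zd zs = Z0 \<union> {zd, zs}"

definition C1_first :: "'a::euclidean_space set \<Rightarrow> 'c::euclidean_space set \<Rightarrow> ('a \<Rightarrow> 'c \<Rightarrow> real) \<Rightarrow> bool" where
  "C1_first X Z0 u \<longleftrightarrow> (\<exists>U Du. open U \<and> X \<times> Z0 \<subseteq> U \<and>
      continuous_on U (\<lambda>(x,z). u x z) \<and>
      (\<forall>(x,z)\<in>U. ((\<lambda>x'. u x' z) has_derivative (\<lambda>h. Du x z \<bullet> h)) (at x)) \<and>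
      continuous_on U (\<lambda>(x,z). Du x z))"

definition uext :: "'c \<Rightarrow> 'c \<Rightarrow> ('a \<Rightarrow> 'c \<Rightarrow> real) \<Rightarrow> 'a \<Rightarrow> 'c \<Rightarrow> real" where
  "uext zd zs u x z = (if z = zd then 0 else if z = zs then -1 else u x z)"

definition vext :: "'c \<Rightarrow> 'c \<Rightarrow> ('b \<Rightarrow> 'c \<Rightarrow> real) \<Rightarrow> 'b \<Rightarrow> 'c \<Rightarrow> real" where
  "vext zd zs v y z = (if z = zs then 0 else if z = zd then 1 else v y z)"

definition bfun :: "'a set \<Rightarrow> ('a \<Rightarrow> 'c \<Rightarrow> real) \<Rightarrow> 'c \<Rightarrow> real" where
  "bfun X uE z = (SUP x\<in>X. uE x z)"

definition afun :: "'b set \<Rightarrow> ('b \<Rightarrow> 'c \<Rightarrow> real) \<Rightarrow> 'c \<Rightarrow> real" where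
  "afun Y vE z = (INF y\<in>Y. vE y z)"

definition Z1set :: "'a set \<Rightarrow> 'b set \<Rightarrow> 'c set \<Rightarrow> ('a \<Rightarrow> 'c \<Rightarrow> real) \<Rightarrow> ('b \<Rightarrow> 'c \<Rightarrow> real) \<Rightarrow> 'c set" where
  "Z1set X Y Z uE vE = {z \<in> Z. afun Y vE z \<le> bfun X uE z}"

definition price_system :: "'c::topological_space set \<Rightarrow> 'c \<Rightarrow> 'c \<Rightarrow> ('c \<Rightarrow> real) \<Rightarrow> bool" where
  "price_system Z zd zs p \<longleftrightarrow> continuous_on Z p \<and> p zd = 0 \<and> p zs = 0"

definition admissible :: "'a set \<Rightarrow> 'b set \<Rightarrow> 'c::topological_space set \<Rightarrow> 'c \<Rightarrow> 'c \<Rightarrow>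
    ('a \<Rightarrow> 'c \<Rightarrow> real) \<Rightarrow> ('b \<Rightarrow> 'c \<Rightarrow> real) \<Rightarrow> ('c \<Rightarrow> real) \<Rightarrow> bool" where
  "admissible X Y Z zd zs uE vE p \<longleftrightarrow> price_system Z zd zs p \<and>
     (\<forall>z\<in>Z1set X Y Z uE vE. afun Y vE z \<le> p z \<and> p z \<le> bfun X uE z)"

definition Dset :: "'c set \<Rightarrow> ('a \<Rightarrow> 'c \<Rightarrow> real) \<Rightarrow> ('c \<Rightarrow> real) \<Rightarrow> 'a \<Rightarrow> 'c set" where
  "Dset Z uE p x = {z \<in> Z. \<forall>z'\<in>Z. uE x z' - p z' \<le> uE x z - p z}"

definition Sset :: "'c set \<Rightarrow> ('b \<Rightarrow> 'c \<Rightarrow> real) \<Rightarrow> ('c \<Rightarrow> real) \<Rightarrow> 'b \<Rightarrow> 'c set" where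
  "Sset Z vE p y = {z \<in> Z. \<forall>z'\<in>Z. vE y z - p z \<le> vE y z' - p z'}"

definition carried_distribution :: "'a::topological_space set \<Rightarrow> 'c::topological_space set \<Rightarrow>
    'a measure \<Rightarrow> ('a \<Rightarrow> 'c set) \<Rightarrow> ('a \<times> 'c) measure \<Rightarrow> bool" where
  "carried_distribution X Z mu F alpha \<longleftrightarrow>
     sets alpha = sets (restrict_space borel (X \<times> Z)) \<and>
     (AE w in alpha. snd w \<in> F (fst w)) \<and>
     distr alpha mu fst = mu"

definition equilibrium :: "'a::topological_space set \<Rightarrow> 'b::topological_space set \<Rightarrow>
    'c::topological_space set \<Rightarrow> 'c \<Rightarrow> 'c \<Rightarrow> 'a measure \<Rightarrow> 'b measure \<Rightarrow>
    ('a \<Rightarrow> 'c \<Rightarrow> real) \<Rightarrow> ('b \<Rightarrow> 'c \<Rightarrow> real) \<Rightarrow>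
    ('c \<Rightarrow> real) \<Rightarrow> ('a \<times> 'c) measure \<Rightarrow> ('b \<times> 'c) measure \<Rightarrow> bool" where
  "equilibrium X Y Z0 zd zs mu nu uE vE p alpha beta \<longleftrightarrow>
     admissible X Y (Zset Z0 zd zs) zd zs uE vE p \<and>
     carried_distribution X (Zset Z0 zd zs) mu (Dset (Zset Z0 zd zs) uE p) alpha \<and>
     carried_distribution Y (Zset Z0 zd zs) nu (Sset (Zset Z0 zd zs) vE p) beta \<and>
     (\<forall>A. A \<in> sets borel \<and> A \<subseteq> Z0 \<longrightarrow> emeasure alpha (X \<times> A) = emeasure beta (Y \<times> A))"

definition disintegrates :: "'a::topological_space set \<Rightarrow> 'c::topological_space set \<Rightarrow>
    'a measure \<Rightarrow> ('a \<times> 'c) measure \<Rightarrow> ('a \<Rightarrow> 'c measure) \<Rightarrow> bool" where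
  "disintegrates X Z mu alpha P \<longleftrightarrow>
     (\<forall>x\<in>X. prob_space (P x) \<and> sets (P x) = sets (restrict_space borel Z)) \<and>
     (\<forall>f :: 'a \<times> 'c \<Rightarrow> real. continuous_on (X \<times> Z) f \<longrightarrow>
        integrable mu (\<lambda>x. \<integral>z. f (x, z) \<partial>(P x)) \<and>
        (\<integral>w. f w \<partial>alpha) = (\<integral>x. (\<integral>z. f (x, z) \<partial>(P x)) \<partial>mu))"

end

theory Submission
  imports Defs
begin

(*
  For a payoff h(x,z) and a distribution alpha on X x Z, the "gap" of alpha is
  the alpha-average of  sup_z' h(x,z') - h(x,z) : the loss of the agents relative
  to their best choice.  It is nonnegative, and it vanishes when alpha is carried
  by the argmax correspondence.  For a buyer payoff u - p and a seller payoff
  p - v, and a pair (alpha, beta) that clears the market on Z0, the two gaps add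
  up to  W(p) - Sigma(alpha,beta), where W(p) only depends on p and
  Sigma(alpha,beta) = int u dalpha - int v dbeta only on the allocation: the
  price terms cancel by market clearing since p vanishes on the two dummy goods.
  Pairing the price of one equilibrium with the allocation of the other, the
  four identities force the gaps of (alpha2, beta2) at the price p1 to vanish.
  Finally, a vanishing gap transfers through the disintegrations to the
  conditional probabilities, which are therefore carried by D1(x), resp. S1(y).
*)

section \<open>Continuity of slices and of partial suprema\<close>

lemma continuous_on_slice:
  assumes "continuous_on (X \<times> Z) f" "x \<in> X"
  shows "continuous_on Z (\<lambda>z. f (x, z))"
  by (rule continuous_on_compose2[OF assms(1), of Z "\<lambda>z. (x,z)"])
     (use assms(2) in \<open>auto intro!: continuous_intros\<close>)

lemma bdd_above_slice:
  fixes f :: "'a::topological_space \<times> 'c::topological_space \<Rightarrow> real"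
  assumes "continuous_on (X \<times> Z) f" "x \<in> X" "compact Z"
  shows "bdd_above ((\<lambda>z. f (x, z)) ` Z)"
  by (intro bounded_imp_bdd_above compact_imp_bounded compact_continuous_image
      assms(3) continuous_on_slice[OF assms(1,2)])

lemma SUP_le_SUP_plus:
  fixes a b :: "'c \<Rightarrow> real"
  assumes "Z \<noteq> {}" "bdd_above (b ` Z)" "\<And>z. z \<in> Z \<Longrightarrow> a z \<le> b z + c"
  shows "(SUP z\<in>Z. a z) \<le> (SUP z\<in>Z. b z) + c"
proof (rule cSUP_least[OF assms(1)])
  fix z assume "z \<in> Z"
  then show "a z \<le> (SUP z\<in>Z. b z) + c"
    using cSUP_upper[OF \<open>z \<in> Z\<close> assms(2)] assms(3) by fastforce
qed

text \<open>The value function  x \<mapsto> sup_z f(x,z)  of a continuous function on a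
  compact product is continuous (uniform continuity of f).\<close>
lemma continuous_on_SUP_slice:
  fixes f :: "'a::metric_space \<times> 'c::metric_space \<Rightarrow> real"
  assumes X: "compact X" and Z: "compact Z" "Z \<noteq> {}" and f: "continuous_on (X \<times> Z) f"
  shows "continuous_on X (\<lambda>x. SUP z\<in>Z. f (x,z))"
  unfolding continuous_on_iff
proof (intro ballI allI impI)
  fix x e assume x: "x \<in> X" and e: "(0::real) < e"
  have "uniformly_continuous_on (X \<times> Z) f"
    using compact_uniformly_continuous[OF f] compact_Times[OF X Z(1)] by blast
  then obtain d where d: "d > 0"
    and dd: "\<forall>a\<in>X\<times>Z. \<forall>b\<in>X\<times>Z. dist b a < d \<longrightarrow> dist (f b) (f a) < e/2"
    using e unfolding uniformly_continuous_on_def by (meson half_gt_zero)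
  show "\<exists>d>0. \<forall>x'\<in>X. dist x' x < d \<longrightarrow> dist (SUP z\<in>Z. f (x',z)) (SUP z\<in>Z. f (x,z)) < e"
  proof (intro exI[of _ d] conjI ballI impI d)
    fix x' assume x': "x' \<in> X" and dx: "dist x' x < d"
    have close: "f (x',z) \<le> f (x,z) + e/2" "f (x,z) \<le> f (x',z) + e/2" if "z \<in> Z" for z
    proof -
      have "dist (x',z) (x,z) < d" using dx by (simp add: dist_Pair_Pair)
      then have "\<bar>f (x',z) - f (x,z)\<bar> < e/2" using dd x x' that by (auto simp: dist_real_def)
      then show "f (x',z) \<le> f (x,z) + e/2" "f (x,z) \<le> f (x',z) + e/2" by arith+
    qed
    have "(SUP z\<in>Z. f (x',z)) \<le> (SUP z\<in>Z. f (x,z)) + e/2"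
      by (rule SUP_le_SUP_plus[OF Z(2) bdd_above_slice[OF f x Z(1)] close(1)])
    moreover have "(SUP z\<in>Z. f (x,z)) \<le> (SUP z\<in>Z. f (x',z)) + e/2"
      by (rule SUP_le_SUP_plus[OF Z(2) bdd_above_slice[OF f x' Z(1)] close(2)])
    ultimately show "dist (SUP z\<in>Z. f (x',z)) (SUP z\<in>Z. f (x,z)) < e"
      using e by (simp add: dist_real_def abs_if)
  qed
qed

lemma continuous_on_extend_two_points:
  fixes g :: "'a::topological_space \<times> 'c::t1_space \<Rightarrow> real"
  assumes X: "closed X" and Z0: "closed Z0"
    and f: "continuous_on (X \<times> Z0) g"
    and gd: "\<And>x. x \<in> X \<Longrightarrow> g (x, zd) = vd" and gs: "\<And>x. x \<in> X \<Longrightarrow> g (x, zs) = vs"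
  shows "continuous_on (X \<times> (Z0 \<union> {zd, zs})) g"
proof -
  have "continuous_on (X \<times> {zd}) g"
    by (rule continuous_on_cong[THEN iffD1, OF refl _ continuous_on_const[of _ vd]]) (auto simp: gd)
  moreover have "continuous_on (X \<times> {zs}) g"
    by (rule continuous_on_cong[THEN iffD1, OF refl _ continuous_on_const[of _ vs]]) (auto simp: gs)
  ultimately have "continuous_on ((X \<times> Z0) \<union> ((X \<times> {zd}) \<union> (X \<times> {zs}))) g"
    using X Z0 by (intro continuous_on_closed_Un f closed_Un closed_Times) auto
  moreover have "(X \<times> Z0) \<union> ((X \<times> {zd}) \<union> (X \<times> {zs})) = X \<times> (Z0 \<union> {zd, zs})" by auto
  ultimately show ?thesis by simp
qed

lemma C1_first_continuous:
  assumes "C1_first X Z0 u"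
  shows "continuous_on (X \<times> Z0) (\<lambda>w. u (fst w) (snd w))"
proof -
  obtain U where "X \<times> Z0 \<subseteq> U" "continuous_on U (\<lambda>(x,z). u x z)"
    using assms unfolding C1_first_def by blast
  then show ?thesis using continuous_on_subset by (fastforce simp: case_prod_beta')
qed

lemma continuous_on_uext:
  assumes "compact X" "compact Z0" "zd \<notin> Z0" "zs \<notin> Z0" "zd \<noteq> zs" "C1_first X Z0 u"
  shows "continuous_on (X \<times> Zset Z0 zd zs) (\<lambda>w. uext zd zs u (fst w) (snd w))"
  unfolding Zset_def
proof (rule continuous_on_extend_two_points[where vd = 0 and vs = "-1"])
  show "continuous_on (X \<times> Z0) (\<lambda>w. uext zd zs u (fst w) (snd w))"
    by (rule continuous_on_cong[THEN iffD1, OF refl _ C1_first_continuous[OF assms(6)]])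
       (use assms(3,4) in \<open>auto simp: uext_def\<close>)
qed (use assms in \<open>auto simp: uext_def compact_imp_closed\<close>)

lemma continuous_on_vext:
  assumes "compact Y" "compact Z0" "zd \<notin> Z0" "zs \<notin> Z0" "zd \<noteq> zs" "C1_first Y Z0 v"
  shows "continuous_on (Y \<times> Zset Z0 zd zs) (\<lambda>w. vext zd zs v (fst w) (snd w))"
  unfolding Zset_def
proof (rule continuous_on_extend_two_points[where vd = 1 and vs = 0])
  show "continuous_on (Y \<times> Z0) (\<lambda>w. vext zd zs v (fst w) (snd w))"
    by (rule continuous_on_cong[THEN iffD1, OF refl _ C1_first_continuous[OF assms(6)]])
       (use assms(3,4) in \<open>auto simp: vext_def\<close>)
qed (use assms in \<open>auto simp: vext_def compact_imp_closed\<close>)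

lemma space_of_sets_restrict_borel:
  "sets M = sets (restrict_space borel S) \<Longrightarrow> space M = S"
  by (metis sets_eq_imp_space_eq space_restrict_space space_borel inf_top.right_neutral)

lemma integrable_continuous_on_compact:
  fixes f :: "'a::topological_space \<Rightarrow> real"
  assumes sa: "sets alpha = sets (restrict_space borel S)" and fa: "finite_measure alpha"
    and "compact S" "continuous_on S f"
  shows "integrable alpha f"
proof -
  have "bounded (f ` S)" by (intro compact_imp_bounded compact_continuous_image assms(3,4))
  then obtain B where B: "\<And>w. w \<in> S \<Longrightarrow> \<bar>f w\<bar> \<le> B" unfolding bounded_iff by force
  have m: "f \<in> borel_measurable alpha"
    using borel_measurable_continuous_on_restrict[OF assms(4)] measurable_cong_sets[OF sa refl] by blast
  show ?thesis
    by (rule finite_measure.integrable_const_bound[OF fa _ m, of B])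
       (use B space_of_sets_restrict_borel[OF sa] in auto)
qed

lemma carried_distribution_basic:
  fixes X :: "'a::euclidean_space set" and Z :: "'c::euclidean_space set"
  assumes c: "carried_distribution X Z mu F alpha"
    and smu: "sets mu = sets (restrict_space borel X)" and fmu: "finite_measure mu"
  shows "space alpha = X \<times> Z" "finite_measure alpha" "fst \<in> measurable alpha mu"
    "sets alpha = sets (restrict_space borel (X \<times> Z))"
proof -
  show sa: "sets alpha = sets (restrict_space borel (X \<times> Z))"
    using c unfolding carried_distribution_def by blast
  show "space alpha = X \<times> Z" using space_of_sets_restrict_borel[OF sa] .
  have "fst \<in> measurable (restrict_space borel (X \<times> Z)) (restrict_space borel X)"
    by (rule measurable_restrict_space3[OF borel_measurable_continuous_onI])
       (auto intro!: continuous_intros)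
  then show fm: "fst \<in> measurable alpha mu"
    using measurable_cong_sets[OF sa smu] by blast
  have "emeasure alpha (space alpha) = emeasure (distr alpha mu fst) (space mu)"
    using emeasure_distr[OF fm sets.top[of mu]] fm
    by (metis (no_types, lifting) inf.absorb_iff2 measurable_space subsetI vimage_eq)
  also have "\<dots> = emeasure mu (space mu)"
    using c unfolding carried_distribution_def by simp
  also have "\<dots> \<noteq> \<infinity>" using finite_measure.emeasure_finite[OF fmu] by simp
  finally show "finite_measure alpha" by (rule finite_measureI)
qed

section \<open>Argmax sets and the gap of a distribution\<close>

definition argmax_set :: "'c set \<Rightarrow> ('a \<Rightarrow> 'c \<Rightarrow> real) \<Rightarrow> 'a \<Rightarrow> 'c set" where
  "argmax_set Z h x = {z \<in> Z. \<forall>z'\<in>Z. h x z' \<le> h x z}"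

definition buyer_payoff :: "('a \<Rightarrow> 'c \<Rightarrow> real) \<Rightarrow> ('c \<Rightarrow> real) \<Rightarrow> 'a \<Rightarrow> 'c \<Rightarrow> real" where
  "buyer_payoff uE p x z = uE x z - p z"

definition seller_payoff :: "('b \<Rightarrow> 'c \<Rightarrow> real) \<Rightarrow> ('c \<Rightarrow> real) \<Rightarrow> 'b \<Rightarrow> 'c \<Rightarrow> real" where
  "seller_payoff vE p y z = p z - vE y z"

lemma Dset_eq_argmax_set: "Dset Z uE p = argmax_set Z (buyer_payoff uE p)"
  unfolding Dset_def argmax_set_def buyer_payoff_def ..

lemma Sset_eq_argmax_set: "Sset Z vE p = argmax_set Z (seller_payoff vE p)"
  by (rule ext) (auto simp: Sset_def argmax_set_def seller_payoff_def)

lemma continuous_on_buyer_payoff: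
  assumes "continuous_on (X \<times> Z) (\<lambda>w. uE (fst w) (snd w))" "continuous_on Z p"
  shows "continuous_on (X \<times> Z) (\<lambda>w. buyer_payoff uE p (fst w) (snd w))"
  unfolding buyer_payoff_def
  by (intro continuous_on_diff assms(1) continuous_on_compose2[OF assms(2)] continuous_intros) auto

lemma continuous_on_seller_payoff:
  assumes "continuous_on (Y \<times> Z) (\<lambda>w. vE (fst w) (snd w))" "continuous_on Z p"
  shows "continuous_on (Y \<times> Z) (\<lambda>w. seller_payoff vE p (fst w) (snd w))"
  unfolding seller_payoff_def
  by (intro continuous_on_diff assms(1) continuous_on_compose2[OF assms(2)] continuous_intros) auto

definition gap :: "'c set \<Rightarrow> ('a \<Rightarrow> 'c \<Rightarrow> real) \<Rightarrow> ('a \<times> 'c) measure \<Rightarrow> real" where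
  "gap Z h alpha = (\<integral>w. (SUP z\<in>Z. h (fst w) z) - h (fst w) (snd w) \<partial>alpha)"

lemma loss_nonneg_and_zero_iff:
  fixes h :: "'a::topological_space \<Rightarrow> 'c::topological_space \<Rightarrow> real"
  assumes hc: "continuous_on (X \<times> Z) (\<lambda>w. h (fst w) (snd w))" and Z: "compact Z"
    and x: "x \<in> X" and z: "z \<in> Z"
  shows "0 \<le> (SUP z\<in>Z. h x z) - h x z"
    "(SUP z\<in>Z. h x z) - h x z = 0 \<longleftrightarrow> z \<in> argmax_set Z h x"
proof -
  have bdd: "bdd_above (h x ` Z)" using bdd_above_slice[OF hc x Z] by simp
  show "0 \<le> (SUP z\<in>Z. h x z) - h x z" using cSUP_upper[OF z bdd] by simp
  have "(SUP z\<in>Z. h x z) \<le> h x z \<longleftrightarrow> (\<forall>z'\<in>Z. h x z' \<le> h x z)"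
    using z bdd by (auto intro: cSUP_least order_trans[OF cSUP_upper])
  then show "(SUP z\<in>Z. h x z) - h x z = 0 \<longleftrightarrow> z \<in> argmax_set Z h x"
    using cSUP_upper[OF z bdd] z unfolding argmax_set_def by auto
qed

lemma gap_nonneg:
  assumes "space alpha = X \<times> Z" "continuous_on (X \<times> Z) (\<lambda>w. h (fst w) (snd w))" "compact Z"
  shows "0 \<le> gap Z h alpha"
  unfolding gap_def
  by (rule integral_nonneg_AE, rule AE_I2)
     (use assms loss_nonneg_and_zero_iff(1)[OF assms(2,3)] in \<open>auto simp: mem_Times_iff\<close>)

lemma gap_zero_if_carried_by_argmax:
  assumes c: "carried_distribution X Z mu (argmax_set Z h) alpha"
    and hc: "continuous_on (X \<times> Z) (\<lambda>w. h (fst w) (snd w))" and Z: "compact Z"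
  shows "gap Z h alpha = 0"
proof -
  have sp: "space alpha = X \<times> Z"
    using c space_of_sets_restrict_borel unfolding carried_distribution_def by blast
  have "AE w in alpha. snd w \<in> argmax_set Z h (fst w)"
    using c unfolding carried_distribution_def by blast
  then have "AE w in alpha. (SUP z\<in>Z. h (fst w) z) - h (fst w) (snd w) = 0"
  proof (rule AE_mp, intro AE_I2 impI)
    fix w assume "w \<in> space alpha" "snd w \<in> argmax_set Z h (fst w)"
    then show "(SUP z\<in>Z. h (fst w) z) - h (fst w) (snd w) = 0"
      using sp loss_nonneg_and_zero_iff(2)[OF hc Z] by (auto simp: mem_Times_iff)
  qed
  then show ?thesis unfolding gap_def by (rule integral_eq_zero_AE)
qed

text \<open>Since the X-marginal of alpha is mu, the gap splits into the value
  int sup_z h(x,z) dmu(x), which does not depend on alpha, minus int h dalpha.\<close>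
lemma gap_eq_value_minus_integral:
  fixes X :: "'a::euclidean_space set" and Z :: "'c::euclidean_space set"
  assumes X: "compact X" and Z: "compact Z" "Z \<noteq> {}"
    and hc: "continuous_on (X \<times> Z) (\<lambda>w. h (fst w) (snd w))"
    and c: "carried_distribution X Z mu F alpha"
    and smu: "sets mu = sets (restrict_space borel X)" and fmu: "finite_measure mu"
  shows "gap Z h alpha = (\<integral>x. (SUP z\<in>Z. h x z) \<partial>mu) - (\<integral>w. h (fst w) (snd w) \<partial>alpha)"
proof -
  note cb = carried_distribution_basic[OF c smu fmu]
  define phi where "phi = (\<lambda>x. SUP z\<in>Z. h x z)"
  have phic: "continuous_on X phi"
    using continuous_on_SUP_slice[OF X Z hc] unfolding phi_def by simp
  have cpt: "compact (X \<times> Z)" using compact_Times[OF X Z(1)] .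
  have ih: "integrable alpha (\<lambda>w. h (fst w) (snd w))"
    by (rule integrable_continuous_on_compact[OF cb(4) cb(2) cpt hc])
  have iphi: "integrable alpha (\<lambda>w. phi (fst w))"
    by (rule integrable_continuous_on_compact[OF cb(4) cb(2) cpt
          continuous_on_compose2[OF phic, of "X \<times> Z" fst]]) (auto intro!: continuous_intros)
  have pm: "phi \<in> borel_measurable mu"
    using borel_measurable_continuous_on_restrict[OF phic] measurable_cong_sets[OF smu refl] by blast
  have "distr alpha mu fst = mu" using c unfolding carried_distribution_def by blast
  then have "(\<integral>w. phi (fst w) \<partial>alpha) = (\<integral>x. phi x \<partial>mu)"
    using integral_distr[OF cb(3) pm] by simp
  then show ?thesis
    using Bochner_Integration.integral_diff[OF iphi ih] unfolding gap_def phi_def by simp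
qed

lemma disintegration_zero_set:
  fixes X :: "'a::euclidean_space set" and Z :: "'c::euclidean_space set" and g :: "'a \<times> 'c \<Rightarrow> real"
  assumes dis: "disintegrates X Z mu alpha P"
    and smu: "sets mu = sets (restrict_space borel X)" and Z: "compact Z"
    and gc: "continuous_on (X \<times> Z) g" and gn: "\<And>x z. x \<in> X \<Longrightarrow> z \<in> Z \<Longrightarrow> 0 \<le> g (x,z)"
    and g0: "(\<integral>w. g w \<partial>alpha) = 0"
  shows "AE x in mu. measure (P x) {z\<in>Z. g (x,z) = 0} = 1"
proof -
  have spm: "space mu = X" using space_of_sets_restrict_borel[OF smu] .
  have int: "integrable mu (\<lambda>x. \<integral>z. g (x, z) \<partial>(P x))"
    and eq: "(\<integral>w. g w \<partial>alpha) = (\<integral>x. (\<integral>z. g (x, z) \<partial>(P x)) \<partial>mu)"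
    using dis gc unfolding disintegrates_def by blast+
  have Px: "prob_space (P x)" "sets (P x) = sets (restrict_space borel Z)" if "x \<in> X" for x
    using dis that unfolding disintegrates_def by blast+
  have sp: "space (P x) = Z" if "x \<in> X" for x using space_of_sets_restrict_borel[OF Px(2)[OF that]] .
  have inner_zero_iff: "(\<integral>z. g (x, z) \<partial>(P x)) = 0 \<longleftrightarrow> (AE z in P x. g (x,z) = 0)"
    and inner_nonneg: "0 \<le> (\<integral>z. g (x, z) \<partial>(P x))" if x: "x \<in> X" for x
  proof -
    have gcx: "continuous_on Z (\<lambda>z. g (x,z))" using continuous_on_slice[OF gc x] .
    have "integrable (P x) (\<lambda>z. g (x,z))"
      by (rule integrable_continuous_on_compact[OF Px(2)[OF x]
            prob_space.finite_measure[OF Px(1)[OF x]] Z gcx])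
    moreover have nonneg: "AE z in P x. 0 \<le> g (x,z)" using gn x sp[OF x] by auto
    ultimately show "(\<integral>z. g (x, z) \<partial>(P x)) = 0 \<longleftrightarrow> (AE z in P x. g (x,z) = 0)"
      by (rule integral_nonneg_eq_0_iff_AE)
    show "0 \<le> (\<integral>z. g (x, z) \<partial>(P x))" by (rule integral_nonneg_AE[OF nonneg])
  qed
  have "AE x in mu. 0 \<le> (\<integral>z. g (x, z) \<partial>(P x))"
    using inner_nonneg spm by (auto intro!: AE_I2)
  then have "AE x in mu. (\<integral>z. g (x, z) \<partial>(P x)) = 0"
    using integral_nonneg_eq_0_iff_AE[OF int] g0 eq by simp
  then show ?thesis
  proof (rule AE_mp, intro AE_I2 impI)
    fix x assume "x \<in> space mu" and "(\<integral>z. g (x, z) \<partial>(P x)) = 0"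
    then have x: "x \<in> X" and ae: "AE z in P x. g (x,z) = 0"
      using spm inner_zero_iff by auto
    have "(\<lambda>z. g (x,z)) \<in> borel_measurable (P x)"
      using borel_measurable_continuous_on_restrict[OF continuous_on_slice[OF gc x]]
        measurable_cong_sets[OF Px(2)[OF x] refl] by blast
    then have "{z \<in> space (P x). g (x,z) = 0} \<in> sets (P x)" by measurable
    then show "measure (P x) {z\<in>Z. g (x,z) = 0} = 1"
      using prob_space.prob_Collect_eq_1[OF Px(1)[OF x], of "\<lambda>z. g (x,z) = 0"] ae sp[OF x] by simp
  qed
qed

lemma argmax_full_measure_if_gap_zero:
  fixes X :: "'a::euclidean_space set" and Z :: "'c::euclidean_space set"
  assumes X: "compact X" and Z: "compact Z" "Z \<noteq> {}"
    and hc: "continuous_on (X \<times> Z) (\<lambda>w. h (fst w) (snd w))"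
    and smu: "sets mu = sets (restrict_space borel X)"
    and dis: "disintegrates X Z mu alpha P" and g0: "gap Z h alpha = 0"
  shows "AE x in mu. measure (P x) (argmax_set Z h x) = 1"
proof -
  define g where "g = (\<lambda>w. (SUP z\<in>Z. h (fst w) z) - h (fst w) (snd w))"
  have "continuous_on X (\<lambda>x. SUP z\<in>Z. h x z)"
    using continuous_on_SUP_slice[OF X Z hc] by simp
  then have gc: "continuous_on (X \<times> Z) g" unfolding g_def
    by (intro continuous_on_diff hc continuous_on_compose2[OF \<open>continuous_on X _\<close>, of "X \<times> Z" fst])
       (auto intro!: continuous_intros)
  have "AE x in mu. measure (P x) {z\<in>Z. g (x,z) = 0} = 1"
    by (rule disintegration_zero_set[OF dis smu Z(1) gc])
       (use loss_nonneg_and_zero_iff(1)[OF hc Z(1)] g0 in \<open>auto simp: g_def gap_def\<close>)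
  then show ?thesis
  proof (rule AE_mp, intro AE_I2 impI)
    fix x assume "x \<in> space mu" and full: "measure (P x) {z\<in>Z. g (x,z) = 0} = 1"
    then have "x \<in> X" using space_of_sets_restrict_borel[OF smu] by simp
    then have "{z\<in>Z. g (x,z) = 0} = argmax_set Z h x"
      using loss_nonneg_and_zero_iff(2)[OF hc Z(1)] by (auto simp: g_def) (auto simp: argmax_set_def)
    then show "measure (P x) (argmax_set Z h x) = 1" using full by simp
  qed
qed

section \<open>Market clearing and the surplus identity\<close>

definition Z0_marginal :: "'c::topological_space set \<Rightarrow> ('a \<times> 'c) measure \<Rightarrow> 'c measure" where
  "Z0_marginal Z0 alpha = density (distr alpha borel snd) (\<lambda>z. ennreal (indicator Z0 z))"

lemma Z0_marginal_integral_and_emeasure: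
  fixes X :: "'a::euclidean_space set" and Z0 :: "'c::euclidean_space set" and p :: "'c \<Rightarrow> real"
  assumes sa: "sets alpha = sets (restrict_space borel (X \<times> Z))" and Z: "Z = Z0 \<union> {zd, zs}"
    and Z0c: "compact Z0" and pc: "continuous_on Z p" and pd: "p zd = 0" and ps: "p zs = 0"
  shows "(\<integral>w. p (snd w) \<partial>alpha) = (\<integral>z. indicator Z0 z *\<^sub>R p z \<partial>Z0_marginal Z0 alpha)"
    "\<And>A. A \<in> sets borel \<Longrightarrow> emeasure (Z0_marginal Z0 alpha) A = emeasure alpha (X \<times> (A \<inter> Z0))"
proof -
  have spa: "space alpha = X \<times> Z" using space_of_sets_restrict_borel[OF sa] .
  have Z0b[measurable]: "Z0 \<in> sets borel" using compact_imp_closed[OF Z0c] by (simp add: borel_closed)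
  have "snd \<in> measurable (restrict_space borel (X \<times> Z)) borel"
    by (rule measurable_restrict_space1, rule borel_measurable_continuous_onI, intro continuous_intros)
  then have sm[measurable]: "snd \<in> measurable alpha borel"
    using measurable_cong_sets[OF sa refl] by blast
  define q where "q = (\<lambda>z. indicator Z0 z *\<^sub>R p z)"
  have qm[measurable]: "q \<in> borel_measurable borel"
    unfolding q_def
    by (rule borel_measurable_continuous_on_indicator[OF Z0b continuous_on_subset[OF pc]]) (auto simp: Z)
  text \<open>p vanishes on the two dummy goods, so only Z0 contributes.\<close>
  have "(\<integral>w. p (snd w) \<partial>alpha) = (\<integral>w. q (snd w) \<partial>alpha)"
    by (rule Bochner_Integration.integral_cong[OF refl])
       (use spa pd ps in \<open>auto simp: q_def Z indicator_def mem_Times_iff\<close>)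
  also have "\<dots> = (\<integral>z. q z \<partial>distr alpha borel snd)"
    using integral_distr[OF sm qm] by simp
  also have "\<dots> = (\<integral>z. indicator Z0 z *\<^sub>R q z \<partial>distr alpha borel snd)"
    by (rule Bochner_Integration.integral_cong) (auto simp: q_def indicator_def)
  also have "\<dots> = (\<integral>z. q z \<partial>Z0_marginal Z0 alpha)"
    unfolding Z0_marginal_def
    by (rule integral_density[symmetric]) (simp_all add: measurable_distr_eq1)
  finally show "(\<integral>w. p (snd w) \<partial>alpha) = (\<integral>z. indicator Z0 z *\<^sub>R p z \<partial>Z0_marginal Z0 alpha)"
    unfolding q_def .
  fix A :: "'c set" assume A[measurable]: "A \<in> sets borel"
  have "emeasure (Z0_marginal Z0 alpha) A
      = (\<integral>\<^sup>+ z. ennreal (indicator Z0 z) * indicator A z \<partial>distr alpha borel snd)"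
    unfolding Z0_marginal_def by (rule emeasure_density) simp_all
  also have "\<dots> = (\<integral>\<^sup>+ z. indicator (A \<inter> Z0) z \<partial>distr alpha borel snd)"
    by (rule nn_integral_cong) (auto simp: indicator_def)
  also have "\<dots> = emeasure alpha (snd -` (A \<inter> Z0) \<inter> space alpha)"
    by (simp add: emeasure_distr[OF sm])
  also have "snd -` (A \<inter> Z0) \<inter> space alpha = X \<times> (A \<inter> Z0)"
    using spa Z by auto
  finally show "emeasure (Z0_marginal Z0 alpha) A = emeasure alpha (X \<times> (A \<inter> Z0))" .
qed

lemma payments_balance:
  fixes X :: "'a::euclidean_space set" and Y :: "'b::euclidean_space set"
    and Z0 :: "'c::euclidean_space set" and p :: "'c \<Rightarrow> real"
  assumes sa: "sets alpha = sets (restrict_space borel (X \<times> Z))"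
    and sb: "sets beta = sets (restrict_space borel (Y \<times> Z))" and Z: "Z = Z0 \<union> {zd, zs}"
    and Z0c: "compact Z0" and pc: "continuous_on Z p" and pd: "p zd = 0" and ps: "p zs = 0"
    and clear: "\<forall>A. A \<in> sets borel \<and> A \<subseteq> Z0 \<longrightarrow> emeasure alpha (X \<times> A) = emeasure beta (Y \<times> A)"
  shows "(\<integral>w. p (snd w) \<partial>alpha) = (\<integral>w. p (snd w) \<partial>beta)"
proof -
  note a = Z0_marginal_integral_and_emeasure[OF sa Z Z0c pc pd ps]
  note b = Z0_marginal_integral_and_emeasure[OF sb Z Z0c pc pd ps]
  have Z0b: "Z0 \<in> sets borel" using compact_imp_closed[OF Z0c] by (simp add: borel_closed)
  have "Z0_marginal Z0 alpha = Z0_marginal Z0 beta"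
  proof (rule measure_eqI)
    fix A assume "A \<in> sets (Z0_marginal Z0 alpha)"
    then have A: "A \<in> sets borel" by (simp add: Z0_marginal_def)
    then show "emeasure (Z0_marginal Z0 alpha) A = emeasure (Z0_marginal Z0 beta) A"
      using a(2)[OF A] b(2)[OF A] clear Z0b by simp
  qed (simp add: Z0_marginal_def)
  then show ?thesis using a(1) b(1) by simp
qed

lemma gap_sum_identity:
  fixes X :: "'a::euclidean_space set" and Y :: "'b::euclidean_space set"
    and Z0 :: "'c::euclidean_space set" and p :: "'c \<Rightarrow> real"
    and uE :: "'a \<Rightarrow> 'c \<Rightarrow> real" and vE :: "'b \<Rightarrow> 'c \<Rightarrow> real"
  assumes X: "compact X" and Y: "compact Y" and Z0: "compact Z0" and Z: "Z = Z0 \<union> {zd, zs}"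
    and uc: "continuous_on (X \<times> Z) (\<lambda>w. uE (fst w) (snd w))"
    and vc: "continuous_on (Y \<times> Z) (\<lambda>w. vE (fst w) (snd w))"
    and pc: "continuous_on Z p" and pd: "p zd = 0" and ps: "p zs = 0"
    and ca: "carried_distribution X Z mu F alpha" and cb: "carried_distribution Y Z nu G beta"
    and smu: "sets mu = sets (restrict_space borel X)" and fmu: "finite_measure mu"
    and snu: "sets nu = sets (restrict_space borel Y)" and fnu: "finite_measure nu"
    and clear: "\<forall>A. A \<in> sets borel \<and> A \<subseteq> Z0 \<longrightarrow> emeasure alpha (X \<times> A) = emeasure beta (Y \<times> A)"
  shows "gap Z (buyer_payoff uE p) alpha + gap Z (seller_payoff vE p) beta
       = (\<integral>x. (SUP z\<in>Z. buyer_payoff uE p x z) \<partial>mu) + (\<integral>y. (SUP z\<in>Z. seller_payoff vE p y z) \<partial>nu)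
         - ((\<integral>w. uE (fst w) (snd w) \<partial>alpha) - (\<integral>w. vE (fst w) (snd w) \<partial>beta))"
proof -
  have Zc: "compact Z" and Zne: "Z \<noteq> {}" using Z0 Z by auto
  note cba = carried_distribution_basic[OF ca smu fmu]
  note cbb = carried_distribution_basic[OF cb snu fnu]
  have cpt: "compact (X \<times> Z)" "compact (Y \<times> Z)" using X Y Zc by (auto intro: compact_Times)
  have psc: "continuous_on (X \<times> Z) (\<lambda>w. p (snd w))" "continuous_on (Y \<times> Z) (\<lambda>w. p (snd w))"
    by (auto intro!: continuous_on_compose2[OF pc] continuous_intros)
  have int_alpha: "integrable alpha (\<lambda>w. uE (fst w) (snd w))" "integrable alpha (\<lambda>w. p (snd w))"
    using integrable_continuous_on_compact[OF cba(4) cba(2) cpt(1)] uc psc(1) by blast+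
  have int_beta: "integrable beta (\<lambda>w. vE (fst w) (snd w))" "integrable beta (\<lambda>w. p (snd w))"
    using integrable_continuous_on_compact[OF cbb(4) cbb(2) cpt(2)] vc psc(2) by blast+
  have "(\<integral>w. p (snd w) \<partial>alpha) = (\<integral>w. p (snd w) \<partial>beta)"
    by (rule payments_balance[OF cba(4) cbb(4) Z Z0 pc pd ps clear])
  then show ?thesis
    using gap_eq_value_minus_integral[OF X Zc Zne continuous_on_buyer_payoff[OF uc pc] ca smu fmu]
      gap_eq_value_minus_integral[OF Y Zc Zne continuous_on_seller_payoff[OF vc pc] cb snu fnu]
      Bochner_Integration.integral_diff[OF int_alpha] Bochner_Integration.integral_diff[OF int_beta(2,1)]
    unfolding buyer_payoff_def seller_payoff_def by simp
qed

section \<open>Exchanging the prices of two equilibria\<close>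

text \<open>Writing G(p,i) for the total gap of allocation i at price p, the identity gives
  G(p,i) = W(p) - Sigma_i, so  G(p1,2) + G(p2,1) = G(p1,1) + G(p2,2) = 0, and all
  individual gaps are nonnegative.\<close>
lemma gaps_vanish_at_other_price:
  fixes X :: "'a::euclidean_space set" and Y :: "'b::euclidean_space set"
    and Z0 :: "'c::euclidean_space set" and p1 p2 :: "'c \<Rightarrow> real"
    and uE :: "'a \<Rightarrow> 'c \<Rightarrow> real" and vE :: "'b \<Rightarrow> 'c \<Rightarrow> real"
  assumes X: "compact X" and Y: "compact Y" and Z0: "compact Z0" and Z: "Z = Z0 \<union> {zd, zs}"
    and uc: "continuous_on (X \<times> Z) (\<lambda>w. uE (fst w) (snd w))"
    and vc: "continuous_on (Y \<times> Z) (\<lambda>w. vE (fst w) (snd w))"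
    and smu: "sets mu = sets (restrict_space borel X)" and fmu: "finite_measure mu"
    and snu: "sets nu = sets (restrict_space borel Y)" and fnu: "finite_measure nu"
    and p1: "continuous_on Z p1" "p1 zd = 0" "p1 zs = 0"
    and p2: "continuous_on Z p2" "p2 zd = 0" "p2 zs = 0"
    and a1: "carried_distribution X Z mu (argmax_set Z (buyer_payoff uE p1)) alpha1"
    and b1: "carried_distribution Y Z nu (argmax_set Z (seller_payoff vE p1)) beta1"
    and a2: "carried_distribution X Z mu (argmax_set Z (buyer_payoff uE p2)) alpha2"
    and b2: "carried_distribution Y Z nu (argmax_set Z (seller_payoff vE p2)) beta2"
    and clear1: "\<forall>A. A \<in> sets borel \<and> A \<subseteq> Z0 \<longrightarrow> emeasure alpha1 (X \<times> A) = emeasure beta1 (Y \<times> A)"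
    and clear2: "\<forall>A. A \<in> sets borel \<and> A \<subseteq> Z0 \<longrightarrow> emeasure alpha2 (X \<times> A) = emeasure beta2 (Y \<times> A)"
  shows "gap Z (buyer_payoff uE p1) alpha2 = 0" "gap Z (seller_payoff vE p1) beta2 = 0"
proof -
  have Zc: "compact Z" using Z0 Z by auto
  note identity = gap_sum_identity[OF X Y Z0 Z uc vc _ _ _ _ _ smu fmu snu fnu]
  note buyer = continuous_on_buyer_payoff[OF uc] and seller = continuous_on_seller_payoff[OF vc]
  note nonneg_a = gap_nonneg[OF carried_distribution_basic(1)[OF _ smu fmu] _ Zc]
  note nonneg_b = gap_nonneg[OF carried_distribution_basic(1)[OF _ snu fnu] _ Zc]
  show "gap Z (buyer_payoff uE p1) alpha2 = 0" "gap Z (seller_payoff vE p1) beta2 = 0"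
    using identity[OF p1 a1 b1 clear1] identity[OF p1 a2 b2 clear2]
      identity[OF p2 a1 b1 clear1] identity[OF p2 a2 b2 clear2]
      gap_zero_if_carried_by_argmax[OF a1 buyer[OF p1(1)] Zc]
      gap_zero_if_carried_by_argmax[OF b1 seller[OF p1(1)] Zc]
      gap_zero_if_carried_by_argmax[OF a2 buyer[OF p2(1)] Zc]
      gap_zero_if_carried_by_argmax[OF b2 seller[OF p2(1)] Zc]
      nonneg_a[OF a2 buyer[OF p1(1)]] nonneg_b[OF b2 seller[OF p1(1)]]
      nonneg_a[OF a1 buyer[OF p2(1)]] nonneg_b[OF b1 seller[OF p2(1)]]
    by linarith+
qed

lemma conditional_laws_carried_by_first_choice_sets:
  fixes X :: "'a::euclidean_space set" and Y :: "'b::euclidean_space set"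
    and Z0 :: "'c::euclidean_space set" and p1 p2 :: "'c \<Rightarrow> real"
    and uE :: "'a \<Rightarrow> 'c \<Rightarrow> real" and vE :: "'b \<Rightarrow> 'c \<Rightarrow> real"
  assumes X: "compact X" and Y: "compact Y" and Z0: "compact Z0" and Z: "Z = Z0 \<union> {zd, zs}"
    and uc: "continuous_on (X \<times> Z) (\<lambda>w. uE (fst w) (snd w))"
    and vc: "continuous_on (Y \<times> Z) (\<lambda>w. vE (fst w) (snd w))"
    and smu: "sets mu = sets (restrict_space borel X)" and fmu: "finite_measure mu"
    and snu: "sets nu = sets (restrict_space borel Y)" and fnu: "finite_measure nu"
    and p1: "continuous_on Z p1" "p1 zd = 0" "p1 zs = 0"
    and a1: "carried_distribution X Z mu (argmax_set Z (buyer_payoff uE p1)) alpha1"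
    and b1: "carried_distribution Y Z nu (argmax_set Z (seller_payoff vE p1)) beta1"
    and clear1: "\<forall>A. A \<in> sets borel \<and> A \<subseteq> Z0 \<longrightarrow> emeasure alpha1 (X \<times> A) = emeasure beta1 (Y \<times> A)"
    and p2: "continuous_on Z p2" "p2 zd = 0" "p2 zs = 0"
    and a2: "carried_distribution X Z mu (argmax_set Z (buyer_payoff uE p2)) alpha2"
    and b2: "carried_distribution Y Z nu (argmax_set Z (seller_payoff vE p2)) beta2"
    and clear2: "\<forall>A. A \<in> sets borel \<and> A \<subseteq> Z0 \<longrightarrow> emeasure alpha2 (X \<times> A) = emeasure beta2 (Y \<times> A)"
    and dis: "disintegrates X Z mu alpha1 P1x" "disintegrates X Z mu alpha2 P2x"
      "disintegrates Y Z nu beta1 P1y" "disintegrates Y Z nu beta2 P2y"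
  shows "(AE x in mu. measure (P2x x) (argmax_set Z (buyer_payoff uE p1) x) = 1 \<and>
                      measure (P1x x) (argmax_set Z (buyer_payoff uE p1) x) = 1) \<and>
         (AE y in nu. measure (P2y y) (argmax_set Z (seller_payoff vE p1) y) = 1 \<and>
                      measure (P1y y) (argmax_set Z (seller_payoff vE p1) y) = 1)"
proof -
  have Zc: "compact Z" and Zne: "Z \<noteq> {}" using Z0 Z by auto
  note buyer1 = continuous_on_buyer_payoff[OF uc p1(1)]
  note seller1 = continuous_on_seller_payoff[OF vc p1(1)]
  have gaps1: "gap Z (buyer_payoff uE p1) alpha1 = 0" "gap Z (seller_payoff vE p1) beta1 = 0"
    using gap_zero_if_carried_by_argmax[OF a1 buyer1 Zc]
      gap_zero_if_carried_by_argmax[OF b1 seller1 Zc] by blast+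
  have gaps2: "gap Z (buyer_payoff uE p1) alpha2 = 0" "gap Z (seller_payoff vE p1) beta2 = 0"
    using gaps_vanish_at_other_price[OF X Y Z0 Z uc vc smu fmu snu fnu
        p1 p2 a1 b1 a2 b2 clear1 clear2] by blast+
  note full_buyer = argmax_full_measure_if_gap_zero[OF X Zc Zne buyer1 smu]
  note full_seller = argmax_full_measure_if_gap_zero[OF Y Zc Zne seller1 snu]
  show ?thesis
    by (intro conjI AE_conjI[OF full_buyer[OF dis(2) gaps2(1)] full_buyer[OF dis(1) gaps1(1)]]
        AE_conjI[OF full_seller[OF dis(4) gaps2(2)] full_seller[OF dis(3) gaps1(2)]])
qed

lemma equilibrium_argmax_form:
  assumes "equilibrium X Y Z0 zd zs mu nu uE vE p alpha beta"
  shows "continuous_on (Zset Z0 zd zs) p" "p zd = 0" "p zs = 0"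
    "carried_distribution X (Zset Z0 zd zs) mu (argmax_set (Zset Z0 zd zs) (buyer_payoff uE p)) alpha"
    "carried_distribution Y (Zset Z0 zd zs) nu (argmax_set (Zset Z0 zd zs) (seller_payoff vE p)) beta"
    "\<forall>A. A \<in> sets borel \<and> A \<subseteq> Z0 \<longrightarrow> emeasure alpha (X \<times> A) = emeasure beta (Y \<times> A)"
  using assms unfolding equilibrium_def admissible_def price_system_def
    Dset_eq_argmax_set Sset_eq_argmax_set by blast+

theorem theorem12:
  fixes X :: "'a::euclidean_space set" and Y :: "'b::euclidean_space set"
    and Z0 :: "'c::euclidean_space set" and zd zs :: 'c
    and mu :: "'a measure" and nu :: "'b measure"
    and u :: "'a \<Rightarrow> 'c \<Rightarrow> real" and v :: "'b \<Rightarrow> 'c \<Rightarrow> real"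
    and p1 p2 :: "'c \<Rightarrow> real"
    and alpha1 alpha2 :: "('a \<times> 'c) measure" and beta1 beta2 :: "('b \<times> 'c) measure"
    and P1x P2x :: "'a \<Rightarrow> 'c measure" and P1y P2y :: "'b \<Rightarrow> 'c measure"
  assumes "compact X" and "compact Y" and "compact Z0"
    and "zd \<noteq> zs" and "zd \<notin> Z0" and "zs \<notin> Z0"
    and "sets mu = sets (restrict_space borel X)" and "finite_measure mu"
    and "sets nu = sets (restrict_space borel Y)" and "finite_measure nu"
    and "C1_first X Z0 u" and "C1_first Y Z0 v"
    and eq1: "equilibrium X Y Z0 zd zs mu nu (uext zd zs u) (vext zd zs v) p1 alpha1 beta1"
    and eq2: "equilibrium X Y Z0 zd zs mu nu (uext zd zs u) (vext zd zs v) p2 alpha2 beta2"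
    and "disintegrates X (Zset Z0 zd zs) mu alpha1 P1x"
    and "disintegrates X (Zset Z0 zd zs) mu alpha2 P2x"
    and "disintegrates Y (Zset Z0 zd zs) nu beta1 P1y"
    and "disintegrates Y (Zset Z0 zd zs) nu beta2 P2y"
  shows "(AE x in mu. measure (P2x x) (Dset (Zset Z0 zd zs) (uext zd zs u) p1 x) = 1 \<and>
                      measure (P1x x) (Dset (Zset Z0 zd zs) (uext zd zs u) p1 x) = 1) \<and>
         (AE y in nu. measure (P2y y) (Sset (Zset Z0 zd zs) (vext zd zs v) p1 y) = 1 \<and>
                      measure (P1y y) (Sset (Zset Z0 zd zs) (vext zd zs v) p1 y) = 1)"
proof -
  have uc: "continuous_on (X \<times> Zset Z0 zd zs) (\<lambda>w. uext zd zs u (fst w) (snd w))"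
    using continuous_on_uext assms by blast
  have vc: "continuous_on (Y \<times> Zset Z0 zd zs) (\<lambda>w. vext zd zs v (fst w) (snd w))"
    using continuous_on_vext assms by blast
  note E1 = equilibrium_argmax_form[OF eq1] and E2 = equilibrium_argmax_form[OF eq2]
  show ?thesis
    unfolding Dset_eq_argmax_set Sset_eq_argmax_set
    by (rule conditional_laws_carried_by_first_choice_sets[OF assms(1-3) Zset_def uc vc
          assms(7-10) E1 E2 assms(15-18)])
qed

end
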